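(* Let $\Omega\subset\mathbb{R}^n$ be a bounded smooth domain and $u\in C^\infty(\bar\Omega)$ with $u>0$, $|\nabla u|<1$, such that $p(x)=\frac12(|x|^2-u(x)^2)$ is strictly convex, and let $y=\nabla p(x)=x-u(x)\nabla u(x)$, $x\in\Omega$, be one-to-one on $\Omega$, with image $\Omega^*=y(\Omega)$. Define $v$ on $\Omega^*$ by $v(y)=u(x)\sqrt{1-|\nabla u(x)|^2}$ and the Legendre transform $q(y)=x\cdot y-p(x)$. Then $q(y)=\frac12(|y|^2+v(y)^2)$. Moreover $\sqrt{1+|\nabla v(y)|^2}=(1-|\nabla u(x)|^2)^{-1/2}$ and $u(x)=v(y)\sqrt{1+|\nabla v(y)|^2}$. Also $x=\nabla q(y)$, $(q_{ij}(y))=(p_{ij}(x))^{-1}$, and the inverse $L^*$ of the map $L(x,u(x))=(x-u\nabla u,\ u\sqrt{1-|\nabla u|^2})$ is given by $L^*(y,v(y))=(x,u(x))$. *)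

theory Defs
  imports "HOL-Analysis.Analysis"
begin

definition partial :: "'n \<Rightarrow> (real^'n \<Rightarrow> real) \<Rightarrow> real^'n \<Rightarrow> real" where
  "partial i f x = (SOME d. ((\<lambda>t. f (x + t *\<^sub>R axis i 1)) has_real_derivative d) (at 0))"

definition grad :: "(real^'n \<Rightarrow> real) \<Rightarrow> real^'n \<Rightarrow> real^'n" where
  "grad f x = (\<chi> i. partial i f x)"

definition hess :: "(real^'n \<Rightarrow> real) \<Rightarrow> real^'n \<Rightarrow> real^'n^'n" where
  "hess f x = (\<chi> i j. partial j (partial i f) x)"

fun Ck_on :: "nat \<Rightarrow> (real^'n) set \<Rightarrow> (real^'n \<Rightarrow> real) \<Rightarrow> bool" where
  "Ck_on 0 U f = continuous_on U f"
| "Ck_on (Suc k) U f = (continuous_on U f \<and> (\<forall>x\<in>U. f differentiable (at x))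
       \<and> (\<forall>i. Ck_on k U (partial i f)))"

definition smooth_on :: "(real^'n) set \<Rightarrow> (real^'n \<Rightarrow> real) \<Rightarrow> bool" where
  "smooth_on U f = (open U \<and> (\<forall>k. Ck_on k U f))"

definition bounded_smooth_domain :: "(real^'n) set \<Rightarrow> bool" where
  "bounded_smooth_domain \<Omega> = (open \<Omega> \<and> connected \<Omega> \<and> bounded \<Omega> \<and> \<Omega> \<noteq> {} \<and>
     (\<exists>\<rho>. smooth_on UNIV \<rho> \<and> \<Omega> = {x. \<rho> x < 0} \<and> (\<forall>x\<in>frontier \<Omega>. grad \<rho> x \<noteq> 0)))"

definition Lmap :: "(real^'n \<Rightarrow> real) \<Rightarrow> real^'n \<Rightarrow> (real^'n) \<times> real" where
  "Lmap u x = (x - u x *\<^sub>R grad u x, u x * sqrt (1 - (norm (grad u x))\<^sup>2))"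

definition Lstar :: "(real^'n \<Rightarrow> real) \<Rightarrow> real^'n \<Rightarrow> (real^'n) \<times> real" where
  "Lstar v y = (y + v y *\<^sub>R grad v y, v y * sqrt (1 + (norm (grad v y))\<^sup>2))"

end

theory Submission
  imports Defs
begin

text \<open>Because \<open>\<nabla>p = y\<close> and \<open>p\<close> is strictly convex, the map \<open>y\<close> has invertible derivative;
  being also continuous and injective, it is a homeomorphism onto the open set \<open>\<Omega>*\<close>
  (invariance of domain) whose inverse is differentiable. Differentiating
  \<open>q(y(x)) = x\<cdot>y(x) - p(x)\<close> through this inverse gives \<open>\<nabla>q = y\<^sup>-\<^sup>1\<close>, and then
  \<open>(q\<^sub>i\<^sub>j) = (p\<^sub>i\<^sub>j)\<^sup>-\<^sup>1\<close>. The identity \<open>q = (|y|\<^sup>2 + v\<^sup>2)/2\<close> is pure algebra, so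
  \<open>v = \<surd>(2q - |y|\<^sup>2)\<close> on \<open>\<Omega>*\<close> and \<open>\<nabla>v = (x - y)/v = \<nabla>u/\<surd>(1 - |\<nabla>u|\<^sup>2)\<close>, from which the
  remaining formulas follow.\<close>

lemma partial_eq_of_has_derivative:
  assumes "(f has_derivative f') (at x)"
  shows "partial i f x = f' (axis i 1)"
proof -
  have "((\<lambda>t::real. x + t *\<^sub>R axis i 1) has_derivative (\<lambda>t. t *\<^sub>R axis i 1)) (at 0)"
    by (auto intro!: derivative_eq_intros)
  from has_derivative_compose[OF this] assms
  have "((\<lambda>t. f (x + t *\<^sub>R axis i 1)) has_derivative (\<lambda>t. f' (t *\<^sub>R axis i 1))) (at 0)"
    by simp
  then have d: "((\<lambda>t. f (x + t *\<^sub>R axis i 1)) has_real_derivative f' (axis i 1)) (at 0)"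
    by (rule has_derivative_imp_has_field_derivative)
       (simp add: linear_cmul[OF has_derivative_linear[OF assms]])
  show ?thesis
    unfolding partial_def by (rule some_equality) (use d DERIV_unique in blast)+
qed

lemma linear_eq_inner_axis:
  fixes f :: "real^'n \<Rightarrow> real"
  assumes "linear f"
  shows "f h = (\<chi> i. f (axis i 1)) \<bullet> h"
proof -
  have "f h = f (\<Sum>i\<in>UNIV. h$i *\<^sub>R axis i 1)"
    using basis_expansion[of h] by (simp add: scalar_mult_eq_scaleR)
  also have "\<dots> = (\<Sum>i\<in>UNIV. h$i * f (axis i 1))"
    using assms by (simp add: linear_sum linear_cmul)
  finally show ?thesis by (simp add: inner_vec_def mult.commute)
qed

lemma grad_eq_of_has_derivative:
  assumes "(f has_derivative (\<lambda>h. a \<bullet> h)) (at x)"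
  shows "grad f x = a"
  using partial_eq_of_has_derivative[OF assms] by (simp add: grad_def vec_eq_iff inner_axis)

lemma has_derivative_grad:
  fixes f :: "real^'n \<Rightarrow> real"
  assumes "f differentiable (at x)"
  shows "(f has_derivative (\<lambda>h. grad f x \<bullet> h)) (at x)"
proof -
  obtain D where D: "(f has_derivative D) (at x)"
    using assms differentiable_def by blast
  have "grad f x = (\<chi> i. D (axis i 1))"
    using partial_eq_of_has_derivative[OF D] by (simp add: grad_def)
  then have "D = (\<lambda>h. grad f x \<bullet> h)"
    by (metis linear_eq_inner_axis[OF has_derivative_linear[OF D]])
  with D show ?thesis by simp
qed

lemma has_derivative_vec_component:
  fixes F :: "real^'n \<Rightarrow> real^'m"
  shows "(F has_derivative F') (at x) \<longleftrightarrow> (\<forall>i. ((\<lambda>z. F z $ i) has_derivative (\<lambda>h. F' h $ i)) (at x))"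
  unfolding has_derivative_componentwise_within[of F F' x UNIV]
  by (auto simp: Basis_vec_def inner_axis)

lemma grad_differentiable:
  fixes f :: "real^'n \<Rightarrow> real"
  assumes "\<And>i. partial i f differentiable (at x)"
  shows "grad f differentiable (at x)"
proof -
  have "(grad f has_derivative (\<lambda>h. \<chi> i. grad (partial i f) x \<bullet> h)) (at x)"
    unfolding has_derivative_vec_component
    using has_derivative_grad[OF assms] by (simp add: grad_def)
  then show ?thesis by (rule differentiableI)
qed

lemma hess_eq_matrix_of_grad_has_derivative:
  assumes "open S" "x \<in> S" "\<And>z. z \<in> S \<Longrightarrow> grad f z = F z"
    and "(F has_derivative F') (at x)"
  shows "hess f x = matrix F'"
    and "partial i f differentiable (at x)"
proof -
  have D: "\<And>i. ((partial i f) has_derivative (\<lambda>h. F' h $ i)) (at x)"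
    by (rule has_derivative_transform_within_open[OF _ assms(1,2)])
       (use assms(3,4) in \<open>auto simp: has_derivative_vec_component grad_def vec_eq_iff\<close>)
  show "hess f x = matrix F'"
    using partial_eq_of_has_derivative[OF D] by (simp add: hess_def matrix_def)
  show "partial i f differentiable (at x)"
    using D by (rule differentiableI)
qed

lemma matrix_inv_eq:
  fixes A B :: "real^'n^'n"
  assumes "A ** B = mat 1" "B ** A = mat 1"
  shows "matrix_inv A = B"
proof -
  let ?C = "matrix_inv A"
  have C: "A ** ?C = mat 1 \<and> ?C ** A = mat 1"
    unfolding matrix_inv_def by (rule someI[of _ B]) (use assms in blast)
  have "?C = ?C ** (A ** B)" using assms by (simp add: matrix_mul_rid)
  also have "\<dots> = B" using C by (simp add: matrix_mul_assoc matrix_mul_lid)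
  finally show ?thesis .
qed

lemma inj_of_positive_definite_matrix:
  fixes f :: "real^'n \<Rightarrow> real^'n"
  assumes "linear f" "\<And>h. h \<noteq> 0 \<Longrightarrow> h \<bullet> (matrix f *v h) > 0"
  shows "inj f"
proof -
  have "h = 0" if "f h = 0" for h
  proof (rule ccontr)
    assume "h \<noteq> 0"
    then have "h \<bullet> (matrix f *v h) > 0" by (rule assms(2))
    moreover have "matrix f *v h = f h"
      by (rule fun_cong[OF matrix_vector_mul(2)[OF assms(1)]])
    ultimately show False using that by simp
  qed
  then show ?thesis using assms(1) linear_inj_iff_eq_0 by blast
qed

lemma has_derivative_inv_into:
  fixes f :: "'a::euclidean_space \<Rightarrow> 'a"
  assumes "open S" "x \<in> S" "continuous_on S f" "inj_on f S"
    and "(f has_derivative f') (at x)" "inj f'"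
  obtains g' where "linear g'" "f' \<circ> g' = id" "g' \<circ> f' = id"
    "(inv_into S f has_derivative g') (at (f x))"
proof -
  have lin: "linear f'" using assms(5) has_derivative_linear by blast
  obtain g' where g': "linear g'" "g' \<circ> f' = id"
    using linear_injective_left_inverse[OF lin assms(6)] by blast
  then have f'g': "f' \<circ> g' = id" using linear_inverse_left lin by blast
  have "\<And>z. z \<in> S \<Longrightarrow> inv_into S f (f z) = z" using assms(4) by simp
  from has_derivative_inverse_strong[OF assms(1-3) this assms(5) f'g']
  show ?thesis by (rule that[OF g'(1) f'g' g'(2)])
qed

lemma has_derivative_half_norm_sq_diff:
  fixes u :: "'a::real_inner \<Rightarrow> real"
  assumes "(u has_derivative (\<lambda>h. a \<bullet> h)) (at x)"
  shows "((\<lambda>z. ((norm z)\<^sup>2 - (u z)\<^sup>2) / 2) has_derivative (\<lambda>h. (x - u x *\<^sub>R a) \<bullet> h)) (at x)"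
proof -
  have "((\<lambda>z. z \<bullet> z) has_derivative (\<lambda>h. x \<bullet> h + h \<bullet> x)) (at x)"
    using has_derivative_inner[OF has_derivative_ident has_derivative_ident, of x UNIV] by simp
  moreover have "((\<lambda>z. u z * u z) has_derivative (\<lambda>h. u x * (a \<bullet> h) + (a \<bullet> h) * u x)) (at x)"
    using has_derivative_mult[OF assms assms] by simp
  ultimately have "((\<lambda>z. (z \<bullet> z - u z * u z) * (1/2)) has_derivative
      (\<lambda>h. ((x \<bullet> h + h \<bullet> x) - (u x * (a \<bullet> h) + (a \<bullet> h) * u x)) * (1/2))) (at x)"
    by (intro has_derivative_mult_left has_derivative_diff)
  moreover have "(\<lambda>h. ((x \<bullet> h + h \<bullet> x) - (u x * (a \<bullet> h) + (a \<bullet> h) * u x)) * (1/2))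
      = (\<lambda>h. (x - u x *\<^sub>R a) \<bullet> h)"
    by (simp add: fun_eq_iff inner_diff_left inner_commute algebra_simps)
  ultimately show ?thesis
    by (simp add: power2_norm_eq_inner power2_eq_square[of "u _"])
qed

lemma C2_half_norm_sq_diff_gradient:
  fixes u :: "real^'n \<Rightarrow> real"
  assumes "Ck_on 2 U u" "x \<in> U"
  shows "((\<lambda>z. ((norm z)\<^sup>2 - (u z)\<^sup>2) / 2) has_derivative (\<lambda>h. (x - u x *\<^sub>R grad u x) \<bullet> h)) (at x)"
    and "(\<lambda>z. z - u z *\<^sub>R grad u z) differentiable (at x)"
proof -
  have "u differentiable (at x)" "grad u differentiable (at x)"
    using assms by (auto simp: numeral_2_eq_2 intro!: grad_differentiable)
  then show "((\<lambda>z. ((norm z)\<^sup>2 - (u z)\<^sup>2) / 2) has_derivative (\<lambda>h. (x - u x *\<^sub>R grad u x) \<bullet> h)) (at x)"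
    and "(\<lambda>z. z - u z *\<^sub>R grad u z) differentiable (at x)"
    by (auto intro: has_derivative_half_norm_sq_diff has_derivative_grad
        differentiable_diff differentiable_scaleR differentiable_ident)
qed

lemma has_derivative_of_two_mul_eq_norm_sq_add_sq:
  fixes q v :: "'a::real_inner \<Rightarrow> real"
  assumes "open V" "y \<in> V"
    and "\<And>z. z \<in> V \<Longrightarrow> 2 * q z = (norm z)\<^sup>2 + (v z)\<^sup>2" "\<And>z. z \<in> V \<Longrightarrow> 0 < v z"
    and "(q has_derivative (\<lambda>h. x \<bullet> h)) (at y)"
  shows "(v has_derivative (\<lambda>h. (inverse (v y) *\<^sub>R (x - y)) \<bullet> h)) (at y)"
proof -
  have v_eq: "v z = sqrt (2 * q z - z \<bullet> z)" if "z \<in> V" for z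
    using assms(3,4)[OF that] by (simp add: power2_norm_eq_inner)
  have pos: "0 < 2 * q y - y \<bullet> y"
    using assms(3,4)[OF assms(2)] by (simp add: power2_norm_eq_inner)
  have "((\<lambda>z. 2 * q z - z \<bullet> z) has_derivative (\<lambda>h. 2 * (x \<bullet> h) - (y \<bullet> h + h \<bullet> y))) (at y)"
    using has_derivative_diff[OF has_derivative_mult_right[OF assms(5), of 2]
        has_derivative_inner[OF has_derivative_ident has_derivative_ident, of y UNIV]] by simp
  from DERIV_compose_FDERIV[OF DERIV_real_sqrt[OF pos] this]
  have "((\<lambda>z. sqrt (2 * q z - z \<bullet> z)) has_derivative
      (\<lambda>h. (2 * (x \<bullet> h) - (y \<bullet> h + h \<bullet> y)) * (inverse (v y) / 2))) (at y)"
    unfolding v_eq[OF assms(2), symmetric] .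
  moreover have "(\<lambda>h. (2 * (x \<bullet> h) - (y \<bullet> h + h \<bullet> y)) * (inverse (v y) / 2))
      = (\<lambda>h. (inverse (v y) *\<^sub>R (x - y)) \<bullet> h)"
    by (simp add: fun_eq_iff inner_diff_left inner_commute algebra_simps)
  ultimately show ?thesis
    using assms(1,2) v_eq by (auto intro: has_derivative_transform_within_open)
qed

lemma legendre_transform_has_derivative:
  fixes p q :: "real^'n \<Rightarrow> real" and Y :: "real^'n \<Rightarrow> real^'n"
  assumes "open \<Omega>" "continuous_on \<Omega> Y" "inj_on Y \<Omega>" "x \<in> \<Omega>"
    and q_Y: "\<And>z. z \<in> \<Omega> \<Longrightarrow> q (Y z) = z \<bullet> Y z - p z"
    and Dp: "(p has_derivative (\<lambda>h. Y x \<bullet> h)) (at x)"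
    and DY: "(Y has_derivative Y') (at x)" "inj Y'"
  shows "(q has_derivative (\<lambda>h. x \<bullet> h)) (at (Y x))"
proof -
  let ?g = "inv_into \<Omega> Y"
  obtain G where G: "linear G" "(?g has_derivative G) (at (Y x))"
    using has_derivative_inv_into[OF assms(1,4,2,3) DY] by metis
  have gY: "?g (Y x) = x" using assms(3,4) by simp
  have "((\<lambda>z. ?g z \<bullet> z - p (?g z)) has_derivative (\<lambda>h. (x \<bullet> h + G h \<bullet> Y x) - Y x \<bullet> G h)) (at (Y x))"
    using has_derivative_diff[OF has_derivative_inner[OF G(2) has_derivative_ident]
        has_derivative_compose[OF G(2), of p]] Dp gY by simp
  then have "((\<lambda>z. ?g z \<bullet> z - p (?g z)) has_derivative (\<lambda>h. x \<bullet> h)) (at (Y x))"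
    by (simp add: inner_commute)
  moreover have "open (Y ` \<Omega>)"
    by (rule invariance_of_domain[OF assms(2,1,3)])
  ultimately show ?thesis
    by (rule has_derivative_transform_within_open) (use assms(3,4) q_Y in auto)
qed

lemma legendre_transform_hess:
  fixes p q :: "real^'n \<Rightarrow> real" and Y :: "real^'n \<Rightarrow> real^'n"
  assumes "open \<Omega>" "inj_on Y \<Omega>" "x \<in> \<Omega>"
    and q_Y: "\<And>z. z \<in> \<Omega> \<Longrightarrow> q (Y z) = z \<bullet> Y z - p z"
    and Dp: "\<And>z. z \<in> \<Omega> \<Longrightarrow> (p has_derivative (\<lambda>h. Y z \<bullet> h)) (at z)"
    and Y_diff: "\<And>z. z \<in> \<Omega> \<Longrightarrow> Y differentiable (at z)"
    and p_convex: "\<And>z h. z \<in> \<Omega> \<Longrightarrow> h \<noteq> 0 \<Longrightarrow> h \<bullet> (hess p z *v h) > 0"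
  shows "open (Y ` \<Omega>)"
    and "(q has_derivative (\<lambda>h. x \<bullet> h)) (at (Y x))"
    and "partial i q differentiable (at (Y x))"
    and "hess q (Y x) = matrix_inv (hess p x)"
proof -
  define Y' where "Y' z = frechet_derivative Y (at z)" for z
  have DY: "(Y has_derivative Y' z) (at z)" if "z \<in> \<Omega>" for z
    unfolding Y'_def using Y_diff[OF that] frechet_derivative_works by blast
  have lin: "linear (Y' z)" if "z \<in> \<Omega>" for z
    using DY[OF that] has_derivative_linear by blast
  have hess_p: "hess p z = matrix (Y' z)" if "z \<in> \<Omega>" for z
    using hess_eq_matrix_of_grad_has_derivative(1)[OF assms(1) that _ DY[OF that]]
      grad_eq_of_has_derivative[OF Dp] by blast
  have inj: "inj (Y' z)" if "z \<in> \<Omega>" for z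
    using inj_of_positive_definite_matrix[OF lin] p_convex hess_p that by metis
  have contY: "continuous_on \<Omega> Y"
    using Y_diff differentiable_imp_continuous_within continuous_at_imp_continuous_on by blast
  have Dq: "(q has_derivative (\<lambda>h. z \<bullet> h)) (at (Y z))" if "z \<in> \<Omega>" for z
    using legendre_transform_has_derivative[OF assms(1) contY assms(2) that q_Y Dp DY inj] that
    by blast
  then show "(q has_derivative (\<lambda>h. x \<bullet> h)) (at (Y x))" using assms(3) .
  let ?g = "inv_into \<Omega> Y"
  obtain G where G: "linear G" "Y' x \<circ> G = id" "G \<circ> Y' x = id"
    "(?g has_derivative G) (at (Y x))"
    using has_derivative_inv_into[OF assms(1,3) contY assms(2) DY inj] assms(3) by metis
  have grad_q: "grad q z = ?g z" if "z \<in> Y ` \<Omega>" for z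
    using that grad_eq_of_has_derivative[OF Dq] assms(2) by auto
  show V: "open (Y ` \<Omega>)" by (rule invariance_of_domain[OF contY assms(1,2)])
  have Yx: "Y x \<in> Y ` \<Omega>" using assms(3) by blast
  show "partial i q differentiable (at (Y x))"
    by (rule hess_eq_matrix_of_grad_has_derivative(2)[OF V Yx grad_q G(4)])
  have "hess q (Y x) = matrix G"
    by (rule hess_eq_matrix_of_grad_has_derivative(1)[OF V Yx grad_q G(4)])
  also have "\<dots> = matrix_inv (hess p x)"
    unfolding hess_p[OF assms(3)]
  proof (rule matrix_inv_eq[symmetric])
    show "matrix (Y' x) ** matrix G = mat 1"
      using matrix_compose[OF G(1) lin[OF assms(3)]] G(2) by (simp add: matrix_id_mat_1)
    show "matrix G ** matrix (Y' x) = mat 1"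
      using matrix_compose[OF lin[OF assms(3)] G(1)] G(3) by (simp add: matrix_id_mat_1)
  qed
  finally show "hess q (Y x) = matrix_inv (hess p x)" .
qed

lemma legendre_dual_value_eq:
  fixes x a :: "'a::real_inner"
  assumes "norm a \<le> 1"
  shows "x \<bullet> (x - w *\<^sub>R a) - ((norm x)\<^sup>2 - w\<^sup>2) / 2
    = ((norm (x - w *\<^sub>R a))\<^sup>2 + (w * sqrt (1 - (norm a)\<^sup>2))\<^sup>2) / 2"
proof -
  have "(w * sqrt (1 - (norm a)\<^sup>2))\<^sup>2 = w\<^sup>2 * (1 - (norm a)\<^sup>2)"
    using assms by (simp add: power_mult_distrib abs_square_le_1)
  moreover have "(norm (x - w *\<^sub>R a))\<^sup>2 = (norm x)\<^sup>2 - 2 * w * (x \<bullet> a) + w\<^sup>2 * (norm a)\<^sup>2"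
    unfolding power2_norm_eq_inner
    by (simp add: inner_diff_left inner_diff_right inner_commute algebra_simps power2_eq_square)
  moreover have "x \<bullet> (x - w *\<^sub>R a) = (norm x)\<^sup>2 - w * (x \<bullet> a)"
    by (simp add: inner_diff_right power2_norm_eq_inner)
  ultimately show ?thesis by (simp add: field_simps)
qed

lemma lorentz_factor_identities:
  fixes a b :: "'a::real_normed_vector"
  assumes "norm a < 1" "b = (1 / sqrt (1 - (norm a)\<^sup>2)) *\<^sub>R a"
  shows "sqrt (1 + (norm b)\<^sup>2) = 1 / sqrt (1 - (norm a)\<^sup>2)"
    and "w * sqrt (1 - (norm a)\<^sup>2) * sqrt (1 + (norm b)\<^sup>2) = w"
    and "(w * sqrt (1 - (norm a)\<^sup>2)) *\<^sub>R b = w *\<^sub>R a"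
proof -
  define s where "s = sqrt (1 - (norm a)\<^sup>2)"
  have s2: "s\<^sup>2 = 1 - (norm a)\<^sup>2" and "0 < s"
    using assms(1) by (auto simp: s_def abs_square_less_1 less_imp_le)
  have b: "b = (1 / s) *\<^sub>R a"
    using assms(2) by (simp add: s_def)
  have "1 + (norm b)\<^sup>2 = (1 / s)\<^sup>2"
    using s2 \<open>0 < s\<close> by (simp add: b field_simps power2_eq_square)
  then have "sqrt (1 + (norm b)\<^sup>2) = 1 / s"
    using \<open>0 < s\<close> by simp
  then show "sqrt (1 + (norm b)\<^sup>2) = 1 / sqrt (1 - (norm a)\<^sup>2)"
    and "w * sqrt (1 - (norm a)\<^sup>2) * sqrt (1 + (norm b)\<^sup>2) = w"
    and "(w * sqrt (1 - (norm a)\<^sup>2)) *\<^sub>R b = w *\<^sub>R a"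
    unfolding s_def[symmetric] using \<open>0 < s\<close> by (simp_all add: b)
qed

theorem lemma2p1:
  fixes \<Omega> :: "(real^'n) set" and u v q :: "real^'n \<Rightarrow> real"
    and p :: "real^'n \<Rightarrow> real" and Y :: "real^'n \<Rightarrow> real^'n"
  defines "p \<equiv> \<lambda>x. ((norm x)\<^sup>2 - (u x)\<^sup>2) / 2"
    and "Y \<equiv> \<lambda>x. x - u x *\<^sub>R grad u x"
  assumes dom: "bounded_smooth_domain \<Omega>"
    and u_smooth: "\<exists>U. closure \<Omega> \<subseteq> U \<and> smooth_on U u"
    and u_pos: "\<forall>x\<in>closure \<Omega>. u x > 0"
    and grad_u: "\<forall>x\<in>closure \<Omega>. norm (grad u x) < 1"
    and p_convex: "\<forall>x\<in>\<Omega>. \<forall>h. h \<noteq> 0 \<longrightarrow> h \<bullet> (hess p x *v h) > 0"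
    and Y_inj: "inj_on Y \<Omega>"
    and v_def: "\<forall>x\<in>\<Omega>. v (Y x) = u x * sqrt (1 - (norm (grad u x))\<^sup>2)"
    and q_def: "\<forall>x\<in>\<Omega>. q (Y x) = x \<bullet> Y x - p x"
  shows "\<forall>x\<in>\<Omega>.
     q (Y x) = ((norm (Y x))\<^sup>2 + (v (Y x))\<^sup>2) / 2
   \<and> v differentiable (at (Y x))
   \<and> sqrt (1 + (norm (grad v (Y x)))\<^sup>2) = 1 / sqrt (1 - (norm (grad u x))\<^sup>2)
   \<and> u x = v (Y x) * sqrt (1 + (norm (grad v (Y x)))\<^sup>2)
   \<and> q differentiable (at (Y x)) \<and> grad q (Y x) = x
   \<and> (\<forall>i. partial i q differentiable (at (Y x)))
   \<and> hess q (Y x) = matrix_inv (hess p x)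
   \<and> Lmap u x = (Y x, v (Y x))
   \<and> Lstar v (Y x) = (x, u x)"
proof -
  obtain U where U: "closure \<Omega> \<subseteq> U" "Ck_on 2 U u"
    using u_smooth unfolding smooth_on_def by blast
  have \<Omega>: "open \<Omega>" "\<Omega> \<subseteq> U" "\<Omega> \<subseteq> closure \<Omega>"
    using dom closure_subset[of \<Omega>] U(1) by (auto simp: bounded_smooth_domain_def)
  have u_x: "0 < u x" "norm (grad u x) < 1" if "x \<in> \<Omega>" for x
    using u_pos grad_u \<Omega>(3) that by auto
  have Dp: "(p has_derivative (\<lambda>h. Y x \<bullet> h)) (at x)"
    and Y_diff: "Y differentiable (at x)" if "x \<in> \<Omega>" for x
    unfolding p_def Y_def using C2_half_norm_sq_diff_gradient U(2) \<Omega>(2) that by blast+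
  note legendre = legendre_transform_hess[OF \<Omega>(1) Y_inj _ q_def[rule_format] Dp Y_diff
      p_convex[rule_format]]
  have v_pos: "0 < v (Y x)" if "x \<in> \<Omega>" for x
    using v_def u_x[OF that] that by (simp add: abs_square_less_1)
  have q_Y: "q (Y x) = ((norm (Y x))\<^sup>2 + (v (Y x))\<^sup>2) / 2" if "x \<in> \<Omega>" for x
    using legendre_dual_value_eq[of "grad u x" x "u x"] q_def v_def u_x(2) that
    by (simp add: p_def Y_def less_imp_le)
  have v_sq: "2 * q z = (norm z)\<^sup>2 + (v z)\<^sup>2" "0 < v z" if "z \<in> Y ` \<Omega>" for z
    using that q_Y v_pos by (auto simp: mult.commute)
  have Dv: "(v has_derivative (\<lambda>h. (inverse (v (Y x)) *\<^sub>R (x - Y x)) \<bullet> h)) (at (Y x))"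
    if "x \<in> \<Omega>" for x
    using has_derivative_of_two_mul_eq_norm_sq_add_sq[OF legendre(1)[OF that] imageI[OF that]
        v_sq legendre(2)[OF that]] .
  have grad_v: "grad v (Y x) = (1 / sqrt (1 - (norm (grad u x))\<^sup>2)) *\<^sub>R grad u x"
    if "x \<in> \<Omega>" for x
    using grad_eq_of_has_derivative[OF Dv[OF that]] v_def v_pos[OF that] u_x(1)[OF that] that
    by (simp add: Y_def field_simps)
  note lorentz = lorentz_factor_identities[OF u_x(2) grad_v]
  have Lstar: "Lstar v (Y x) = (x, u x)" if "x \<in> \<Omega>" for x
    using v_def lorentz(2,3)[OF that that] that by (simp add: Lstar_def Y_def)
  show ?thesis
    using q_Y differentiableI[OF Dv] lorentz(1) lorentz(2)[symmetric] v_def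
      differentiableI[OF legendre(2)] grad_eq_of_has_derivative[OF legendre(2)] legendre(3,4) Lstar
    by (simp add: Lmap_def Y_def)
qed

end
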